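(* Let $G$ be a Tanner graph with largest right (check-node) degree $d_r^+$. If $p$ is any lift-realizable pseudocodeword of $G$ and $b$ is its maximum component, then the smallest degree of a lift of $G$ in which $p$ is realized is at most $\frac{b\,d_r^+}{2}$.
   Context: A Tanner graph $G$ is a finite bipartite graph with variable nodes $v_1,\dots,v_n$ and check nodes; it defines the binary code of all $x\in\{0,1\}^n$ such that every check node has an even number of neighbours $v_i$ with $x_i=1$. A degree-$\ell$ lift of $G$ replaces each node by a cloud of $\ell$ copies and each edge $(x,y)$ by a perfect matching between the clouds. A lift-realizable pseudocodeword $p\in\mathbb{Z}_{\ge0}^n$ is obtained (realized) from a codeword of the code of some finite lift by letting $p_i$ be the number of copies of $v_i$ assigned 1. *)

theory Defs
  imports Complex_Main
begin

definition tanner_graph :: "nat \<Rightarrow> nat \<Rightarrow> (nat \<times> nat) set \<Rightarrow> bool" where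
  "tanner_graph n m E \<longleftrightarrow> E \<subseteq> {..<n} \<times> {..<m}"

definition check_degree :: "(nat \<times> nat) set \<Rightarrow> nat \<Rightarrow> nat" where
  "check_degree E j = card {i. (i, j) \<in> E}"

definition max_check_degree :: "nat \<Rightarrow> (nat \<times> nat) set \<Rightarrow> nat" where
  "max_check_degree m E = Max (insert 0 (check_degree E ` {..<m}))"

text \<open>A degree-l lift: each edge e is replaced by a perfect matching between the
  clouds, given by a bijection pi e on the copy indices {..<l}: copy a of the
  variable node is joined to copy (pi e a) of the check node.\<close>
definition is_lift :: "(nat \<times> nat) set \<Rightarrow> nat \<Rightarrow> ((nat \<times> nat) \<Rightarrow> nat \<Rightarrow> nat) \<Rightarrow> bool" where
  "is_lift E l \<pi> \<longleftrightarrow> 1 \<le> l \<and> (\<forall>e\<in>E. bij_betw (\<pi> e) {..<l} {..<l})"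

text \<open>x i a = True means copy a of variable node i is assigned 1.\<close>
definition lift_codeword ::
  "nat \<Rightarrow> (nat \<times> nat) set \<Rightarrow> nat \<Rightarrow> ((nat \<times> nat) \<Rightarrow> nat \<Rightarrow> nat) \<Rightarrow> (nat \<Rightarrow> nat \<Rightarrow> bool) \<Rightarrow> bool" where
  "lift_codeword m E l \<pi> x \<longleftrightarrow>
     (\<forall>j<m. \<forall>c<l. even (card {(i, a). (i, j) \<in> E \<and> a < l \<and> \<pi> (i, j) a = c \<and> x i a}))"

definition realized_in_lift ::
  "nat \<Rightarrow> nat \<Rightarrow> (nat \<times> nat) set \<Rightarrow> nat \<Rightarrow> (nat \<Rightarrow> nat) \<Rightarrow> bool" where
  "realized_in_lift n m E l p \<longleftrightarrow>
     (\<exists>\<pi> x. is_lift E l \<pi> \<and> lift_codeword m E l \<pi> x \<and>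
            (\<forall>i<n. p i = card {a. a < l \<and> x i a}))"

definition lift_realizable :: "nat \<Rightarrow> nat \<Rightarrow> (nat \<times> nat) set \<Rightarrow> (nat \<Rightarrow> nat) \<Rightarrow> bool" where
  "lift_realizable n m E p \<longleftrightarrow> (\<exists>l. realized_in_lift n m E l p)"

definition max_component :: "nat \<Rightarrow> (nat \<Rightarrow> nat) \<Rightarrow> nat" where
  "max_component n p = Max (insert 0 (p ` {..<n}))"

end

theory Submission
  imports Defs
begin

text \<open>Fix a realization of \<open>p\<close> in some lift and call a copy of a check node active if it is
  joined to a copy of a variable node carrying a 1. By the parity condition every active copy
  is joined to at least two such ones, so check node \<open>j\<close> has at most
  \<open>(\<Sum>i\<sim>j. p i) / 2 \<le> b d\<^sub>r\<^sup>+ / 2\<close> active copies. The parity conditions only depend on the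
  sets of copies of \<open>j\<close> reached from the ones of \<open>v\<^sub>i\<close>; so relabelling the active copies of each
  check node injectively into \<open>{..<L}\<close>, with \<open>L = \<lfloor>b d\<^sub>r\<^sup>+ / 2\<rfloor>\<close>, and moving the ones of each
  \<open>v\<^sub>i\<close> to the copies \<open>0, \<dots>, p i - 1\<close> yields a realization of \<open>p\<close> in a lift of degree \<open>L\<close>.\<close>

lemma ex_bij_betw_self_image_eq:
  assumes "finite A" "X \<subseteq> A" "Y \<subseteq> A" "card X = card Y"
  shows "\<exists>\<sigma>. bij_betw \<sigma> A A \<and> \<sigma> ` X = Y"
proof -
  have fin: "finite X" "finite Y" using assms finite_subset by auto
  obtain g where g: "bij_betw g X Y" using finite_same_card_bij[OF fin assms(4)] by blast
  have "card (A - X) = card (A - Y)" using assms fin by (simp add: card_Diff_subset)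
  then obtain h where h: "bij_betw h (A - X) (A - Y)"
    using finite_same_card_bij assms(1) by blast
  define \<sigma> where "\<sigma> a = (if a \<in> X then g a else h a)" for a
  have "bij_betw \<sigma> X Y" using g bij_betw_cong[of X \<sigma> g Y] by (simp add: \<sigma>_def)
  moreover have "bij_betw \<sigma> (A - X) (A - Y)"
    using h bij_betw_cong[of "A - X" \<sigma> h "A - Y"] by (simp add: \<sigma>_def)
  ultimately have "bij_betw \<sigma> (X \<union> (A - X)) (Y \<union> (A - Y))"
    by (rule bij_betw_combine) blast
  moreover have "X \<union> (A - X) = A" "Y \<union> (A - Y) = A" using assms by auto
  ultimately show ?thesis using \<open>bij_betw \<sigma> X Y\<close> bij_betw_imp_surj_on by metis
qed

lemma two_card_UN_le_sum_card:
  assumes "finite I" "\<And>i. i \<in> I \<Longrightarrow> finite (H i)"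
    and "\<And>c. c \<in> (\<Union>i\<in>I. H i) \<Longrightarrow> even (card {i\<in>I. c \<in> H i})"
  shows "2 * card (\<Union>i\<in>I. H i) \<le> (\<Sum>i\<in>I. card (H i))"
proof -
  let ?U = "\<Union>i\<in>I. H i"
  have "finite ?U" using assms by blast
  have "2 * card ?U = (\<Sum>c\<in>?U. 2)" by simp
  also have "\<dots> \<le> (\<Sum>c\<in>?U. card {i\<in>I. c \<in> H i})"
  proof (rule sum_mono)
    fix c assume c: "c \<in> ?U"
    then have "card {i\<in>I. c \<in> H i} \<noteq> 0" using assms(1) by auto
    with assms(3)[OF c] show "2 \<le> card {i\<in>I. c \<in> H i}" by presburger
  qed
  also have "\<dots> = (\<Sum>i\<in>I. card {c\<in>?U. c \<in> H i})"
    by (rule sum_multicount_gen[symmetric]) (use assms(1) \<open>finite ?U\<close> in auto)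
  also have "\<dots> = (\<Sum>i\<in>I. card (H i))"
    by (intro sum.cong refl arg_cong[where f = card]) auto
  finally show ?thesis .
qed

definition check_copies_hit ::
  "nat \<Rightarrow> ((nat \<times> nat) \<Rightarrow> nat \<Rightarrow> nat) \<Rightarrow> (nat \<Rightarrow> nat \<Rightarrow> bool) \<Rightarrow> nat \<Rightarrow> nat \<Rightarrow> nat set" where
  "check_copies_hit l \<pi> x i j = \<pi> (i, j) ` {a. a < l \<and> x i a}"

definition active_check_copies ::
  "(nat \<times> nat) set \<Rightarrow> nat \<Rightarrow> ((nat \<times> nat) \<Rightarrow> nat \<Rightarrow> nat) \<Rightarrow> (nat \<Rightarrow> nat \<Rightarrow> bool) \<Rightarrow> nat \<Rightarrow> nat set"
  where
  "active_check_copies E l \<pi> x j = (\<Union>i\<in>{i. (i, j) \<in> E}. check_copies_hit l \<pi> x i j)"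

lemma check_copies_hit_subset:
  assumes "is_lift E l \<pi>" "(i, j) \<in> E"
  shows "check_copies_hit l \<pi> x i j \<subseteq> {..<l}"
  using assms unfolding is_lift_def check_copies_hit_def bij_betw_def by auto

lemma card_check_copies_hit:
  assumes "is_lift E l \<pi>" "(i, j) \<in> E"
  shows "card (check_copies_hit l \<pi> x i j) = card {a. a < l \<and> x i a}"
proof -
  have "inj_on (\<pi> (i, j)) {..<l}" using assms unfolding is_lift_def bij_betw_def by auto
  then show ?thesis
    unfolding check_copies_hit_def by (rule card_image[OF inj_on_subset]) auto
qed

lemma active_check_copies_subset:
  assumes "is_lift E l \<pi>"
  shows "active_check_copies E l \<pi> x j \<subseteq> {..<l}"
  using check_copies_hit_subset[OF assms] unfolding active_check_copies_def by blast

text \<open>A copy of check node \<open>j\<close> is joined to exactly one copy of each neighbour \<open>v\<^sub>i\<close>, so the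
  parity condition counts variable nodes rather than their copies.\<close>
lemma lift_codeword_iff_check_copies_hit:
  assumes "is_lift E l \<pi>"
  shows "lift_codeword m E l \<pi> x \<longleftrightarrow>
    (\<forall>j<m. \<forall>c<l. even (card {i. (i, j) \<in> E \<and> c \<in> check_copies_hit l \<pi> x i j}))"
proof -
  have "card {(i, a). (i, j) \<in> E \<and> a < l \<and> \<pi> (i, j) a = c \<and> x i a}
      = card {i. (i, j) \<in> E \<and> c \<in> check_copies_hit l \<pi> x i j}" (is "card ?S = card ?T")
    for j c
  proof -
    have "a = a'" if "(i, j) \<in> E" "a < l" "a' < l" "\<pi> (i, j) a = \<pi> (i, j) a'" for i a a'
      using assms that unfolding is_lift_def bij_betw_def inj_on_def by blast
    then have "inj_on fst ?S" by (intro inj_onI) auto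
    moreover have "fst ` ?S = ?T"
    proof
      show "?T \<subseteq> fst ` ?S"
      proof
        fix i assume "i \<in> ?T"
        then obtain a where "(i, j) \<in> E" "a < l" "x i a" "\<pi> (i, j) a = c"
          unfolding check_copies_hit_def by auto
        then have "(i, a) \<in> ?S" by simp
        then show "i \<in> fst ` ?S" by force
      qed
      show "fst ` ?S \<subseteq> ?T"
      proof
        fix i assume "i \<in> fst ` ?S"
        then obtain a where "(i, j) \<in> E" "a < l" "x i a" "\<pi> (i, j) a = c" by auto
        then show "i \<in> ?T" unfolding check_copies_hit_def by auto
      qed
    qed
    ultimately show ?thesis using card_image[of fst ?S] by simp
  qed
  then show ?thesis unfolding lift_codeword_def by simp
qed

lemma two_card_active_check_copies_le:
  assumes "tanner_graph n m E" "is_lift E l \<pi>" "lift_codeword m E l \<pi> x"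
    and "\<forall>i<n. p i = card {a. a < l \<and> x i a}"
  shows "2 * card (active_check_copies E l \<pi> x j) \<le> (\<Sum>i | (i, j) \<in> E. p i)"
proof -
  have E: "E \<subseteq> {..<n} \<times> {..<m}" using assms(1) unfolding tanner_graph_def .
  have "finite {i. (i, j) \<in> E}" using E by (auto intro: finite_subset[of _ "{..<n}"])
  moreover have "even (card {i \<in> {i. (i, j) \<in> E}. c \<in> check_copies_hit l \<pi> x i j})"
    if "c \<in> active_check_copies E l \<pi> x j" for c
  proof -
    from that obtain i where i: "(i, j) \<in> E" "c \<in> check_copies_hit l \<pi> x i j"
      unfolding active_check_copies_def by blast
    then have "j < m" "c < l" using E check_copies_hit_subset[OF assms(2) i(1), of x] by auto
    then show ?thesis
      using assms(3) unfolding lift_codeword_iff_check_copies_hit[OF assms(2)] by simp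
  qed
  ultimately have "2 * card (active_check_copies E l \<pi> x j)
      \<le> (\<Sum>i | (i, j) \<in> E. card (check_copies_hit l \<pi> x i j))"
    unfolding active_check_copies_def
    by (intro two_card_UN_le_sum_card) (auto intro: finite_subset[OF check_copies_hit_subset[OF assms(2)]])
  also have "\<dots> = (\<Sum>i | (i, j) \<in> E. p i)"
    using E assms(4) by (intro sum.cong) (auto simp: card_check_copies_hit[OF assms(2)])
  finally show ?thesis .
qed

lemma realized_in_lift_of_check_copy_sets:
  assumes "1 \<le> L" "\<forall>i<n. p i \<le> L"
    and S: "\<And>i j. (i, j) \<in> E \<Longrightarrow> S i j \<subseteq> {..<L} \<and> card (S i j) = p i"
    and even_S: "\<forall>j<m. \<forall>c<L. even (card {i. (i, j) \<in> E \<and> c \<in> S i j})"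
  shows "realized_in_lift n m E L p"
proof -
  have p_le: "p i \<le> L" if "(i, j) \<in> E" for i j
    using card_mono[OF finite_lessThan, of "S i j" L] S[OF that] by simp
  have "\<forall>e\<in>E. \<exists>\<sigma>. bij_betw \<sigma> {..<L} {..<L} \<and> \<sigma> ` {..<p (fst e)} = S (fst e) (snd e)"
  proof
    fix e assume "e \<in> E"
    then have e: "(fst e, snd e) \<in> E" by simp
    then show "\<exists>\<sigma>. bij_betw \<sigma> {..<L} {..<L} \<and> \<sigma> ` {..<p (fst e)} = S (fst e) (snd e)"
      using S[OF e] p_le[OF e] by (intro ex_bij_betw_self_image_eq) auto
  qed
  then obtain \<sigma> where \<sigma>: "\<And>e. e \<in> E \<Longrightarrow>
      bij_betw (\<sigma> e) {..<L} {..<L} \<and> \<sigma> e ` {..<p (fst e)} = S (fst e) (snd e)"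
    using bchoice by metis
  define y where "y i a = (a < p i)" for i a
  have lift: "is_lift E L \<sigma>" using assms(1) \<sigma> unfolding is_lift_def by blast
  have "check_copies_hit L \<sigma> y i j = S i j" if "(i, j) \<in> E" for i j
  proof -
    have "{a. a < L \<and> y i a} = {..<p i}" using p_le[OF that] unfolding y_def by auto
    then show ?thesis using \<sigma>[OF that] unfolding check_copies_hit_def by simp
  qed
  then have "{i. (i, j) \<in> E \<and> c \<in> check_copies_hit L \<sigma> y i j} = {i. (i, j) \<in> E \<and> c \<in> S i j}"
    for j c by auto
  then have cw: "lift_codeword m E L \<sigma> y"
    using even_S unfolding lift_codeword_iff_check_copies_hit[OF lift] by simp
  have card_y: "\<forall>i<n. p i = card {a. a < L \<and> y i a}"
  proof (intro allI impI)
    fix i assume "i < n"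
    then have "{a. a < L \<and> y i a} = {..<p i}" using assms(2) unfolding y_def by auto
    then show "p i = card {a. a < L \<and> y i a}" by simp
  qed
  show ?thesis
    unfolding realized_in_lift_def by (intro exI[of _ \<sigma>] exI[of _ y] conjI lift cw card_y)
qed

text \<open>The active copies of each check node are relabelled injectively into \<open>{..<L}\<close>; since
  every set \<open>check_copies_hit l \<pi> x i j\<close> consists of active copies, the relabelling preserves
  which variable nodes reach a given copy, and hence all parities.\<close>
lemma realized_in_lift_compress:
  assumes E: "tanner_graph n m E"
    and lift: "is_lift E l \<pi>" and cw: "lift_codeword m E l \<pi> x"
    and p: "\<forall>i<n. p i = card {a. a < l \<and> x i a}"
    and "1 \<le> L" "\<forall>i<n. p i \<le> L"
    and active_le: "\<forall>j<m. card (active_check_copies E l \<pi> x j) \<le> L"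
  shows "realized_in_lift n m E L p"
proof -
  let ?A = "active_check_copies E l \<pi> x"
  let ?H = "check_copies_hit l \<pi> x"
  have "finite (?A j)" for j
    using active_check_copies_subset[OF lift] finite_subset by blast
  then have "\<exists>f. inj_on f (?A j) \<and> f ` ?A j \<subseteq> {..<L}" if "j < m" for j
    using card_le_inj[OF _ finite_lessThan, of "?A j" L] active_le that by auto
  then obtain f where f: "\<And>j. j < m \<Longrightarrow> inj_on (f j) (?A j) \<and> f j ` ?A j \<subseteq> {..<L}"
    by metis
  have E_sub: "E \<subseteq> {..<n} \<times> {..<m}" using E unfolding tanner_graph_def .
  have H_A: "?H i j \<subseteq> ?A j" if "(i, j) \<in> E" for i j
    using that unfolding active_check_copies_def by blast
  show ?thesis
  proof (rule realized_in_lift_of_check_copy_sets)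
    fix i j assume ij: "(i, j) \<in> E"
    then have "i < n" "j < m" using E_sub by auto
    have "card (f j ` ?H i j) = card (?H i j)"
      using f[OF \<open>j < m\<close>] H_A[OF ij] by (intro card_image) (blast intro: inj_on_subset)
    also have "\<dots> = p i" using card_check_copies_hit[OF lift ij] p \<open>i < n\<close> by simp
    finally show "f j ` ?H i j \<subseteq> {..<L} \<and> card (f j ` ?H i j) = p i"
      using f[OF \<open>j < m\<close>] H_A[OF ij] by blast
  next
    show "\<forall>j<m. \<forall>c'<L. even (card {i. (i, j) \<in> E \<and> c' \<in> f j ` ?H i j})"
    proof (intro allI impI)
      fix j c' assume "j < m" "c' < L"
      show "even (card {i. (i, j) \<in> E \<and> c' \<in> f j ` ?H i j})"
      proof (cases "c' \<in> f j ` ?A j")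
        case True
        then obtain c where c: "c \<in> ?A j" "c' = f j c" by blast
        then have "c < l" using subsetD[OF active_check_copies_subset[OF lift]] by simp
        have inj: "inj_on (f j) (?A j)" using f[OF \<open>j < m\<close>] by simp
        have "c' \<in> f j ` ?H i j \<longleftrightarrow> c \<in> ?H i j" if "(i, j) \<in> E" for i
          using inj_on_image_mem_iff[OF inj c(1) H_A[OF that]] c(2) by simp
        then have "{i. (i, j) \<in> E \<and> c' \<in> f j ` ?H i j} = {i. (i, j) \<in> E \<and> c \<in> ?H i j}"
          by blast
        then show ?thesis
          using cw \<open>j < m\<close> \<open>c < l\<close> unfolding lift_codeword_iff_check_copies_hit[OF lift] by simp
      next
        case False
        then have "{i. (i, j) \<in> E \<and> c' \<in> f j ` ?H i j} = {}" using H_A by blast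
        then show ?thesis by (simp only: card.empty even_zero)
      qed
    qed
  qed fact+
qed

lemma le_max_component: "i < n \<Longrightarrow> p i \<le> max_component n p"
  unfolding max_component_def by (intro Max_ge) auto

lemma check_degree_le_max: "j < m \<Longrightarrow> check_degree E j \<le> max_check_degree m E"
  unfolding max_check_degree_def by (intro Max_ge) auto

lemma two_card_active_check_copies_le_max:
  assumes E: "tanner_graph n m E"
    and lift: "is_lift E l \<pi>" and cw: "lift_codeword m E l \<pi> x"
    and p: "\<forall>i<n. p i = card {a. a < l \<and> x i a}"
    and "j < m"
  shows "2 * card (active_check_copies E l \<pi> x j) \<le> max_component n p * max_check_degree m E"
proof -
  have E_sub: "E \<subseteq> {..<n} \<times> {..<m}" using E unfolding tanner_graph_def .
  have "2 * card (active_check_copies E l \<pi> x j) \<le> (\<Sum>i | (i, j) \<in> E. p i)"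
    by (rule two_card_active_check_copies_le[OF E lift cw p])
  also have "\<dots> \<le> check_degree E j * max_component n p"
    unfolding check_degree_def using E_sub le_max_component[of _ n p]
    by (intro sum_bounded_above[where K = "max_component n p", simplified]) auto
  also have "\<dots> \<le> max_check_degree m E * max_component n p"
    using check_degree_le_max[OF \<open>j < m\<close>] by simp
  finally show ?thesis by (simp add: mult.commute)
qed

theorem corollary2:
  fixes n m :: nat and E :: "(nat \<times> nat) set" and p :: "nat \<Rightarrow> nat"
  assumes "tanner_graph n m E"
    and "lift_realizable n m E p"
    and "\<exists>i<n. p i \<noteq> 0"
    and "2 \<le> max_check_degree m E"
  shows "real (LEAST l. realized_in_lift n m E l p)
           \<le> real (max_component n p) * real (max_check_degree m E) / 2"
proof -
  obtain l \<pi> x where lift: "is_lift E l \<pi>" and cw: "lift_codeword m E l \<pi> x"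
    and p: "\<forall>i<n. p i = card {a. a < l \<and> x i a}"
    using assms(2) unfolding lift_realizable_def realized_in_lift_def by blast
  define b d where "b = max_component n p" and "d = max_check_degree m E"
  define L where "L = b * d div 2"
  have "1 \<le> b" using assms(3) le_max_component[of _ n p] unfolding b_def by fastforce
  have "b \<le> L"
    using div_le_mono[of "b * 2" "b * d" 2] assms(4) unfolding L_def d_def by simp
  then have p_le: "\<forall>i<n. p i \<le> L"
    using le_max_component[of _ n p] unfolding b_def by (auto intro: order_trans)
  have active_le: "\<forall>j<m. card (active_check_copies E l \<pi> x j) \<le> L"
    using div_le_mono[OF two_card_active_check_copies_le_max[OF assms(1) lift cw p], of _ 2]
    unfolding L_def b_def d_def by simp
  have "realized_in_lift n m E L p"
    using \<open>1 \<le> b\<close> \<open>b \<le> L\<close>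
    by (intro realized_in_lift_compress[OF assms(1) lift cw p _ p_le active_le]) simp
  then have "(LEAST l. realized_in_lift n m E l p) \<le> L" by (rule Least_le)
  moreover have "2 * L \<le> b * d" unfolding L_def by simp
  ultimately have "2 * (LEAST l. realized_in_lift n m E l p) \<le> b * d" by linarith
  then have "real (2 * (LEAST l. realized_in_lift n m E l p)) \<le> real (b * d)"
    by (simp only: of_nat_le_iff)
  then show ?thesis unfolding b_def d_def by simp
qed

end
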